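(* Let $\alpha,\beta$ be relatively prime positive integers. For an integer $t\ge2$, let $n_t=\beta g_tg_{t+1}$, $a_t=(\beta-1)g_{t+1}+\alpha g_t$, and $b_t=g_t$. Then $a(n_t)=a_t$, $b(n_t)=b_t$, and $t(n_t)=t$.
   Context: For positive integers $a_1,a_2$, the $(\alpha,\beta)$-walk $w_k(a_1,a_2)$ is given by $w_1=a_1$, $w_2=a_2$, $w_{k+2}=\alpha w_{k+1}+\beta w_k$ ($k\ge1$). For a positive integer $n$, $s(n;a_1,a_2)$ is the (largest) index $s$ with $w_s(a_1,a_2)=n$ ($-\infty$ if none), and $s(n)=\max_{a_1,a_2\ge1}s(n;a_1,a_2)$. The sequence $g_k$: $g_1=1$, $g_2=\alpha$, $g_{k+2}=\alpha g_{k+1}+\beta g_k$. For $n$ with $s(n)>2$, $a(n),b(n),t(n)$ denote the unique integers $a,b,t$ (which the paper proves exist) with $n=ag_t+\beta bg_{t-1}$, $t\ge2$, $a\le(\beta-1)g_{t+1}+\alpha b$, $b\le g_t$, and such that $a-\alpha b-\ell g_{t+1}$ is not a positive multiple of $\beta$ for any integer $\ell\ge0$. (The conclusion includes that $s(n_t)>2$, so these quantities are defined for $n_t$.) *)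

theory Defs
  imports Complex_Main "HOL-Library.Extended_Real"
begin

text \<open>The (alpha,beta)-walk; index 0 is unused (the paper indexes from 1).\<close>
fun walk :: "int \<Rightarrow> int \<Rightarrow> int \<Rightarrow> int \<Rightarrow> nat \<Rightarrow> int" where
  "walk \<alpha> \<beta> a1 a2 0 = 0"
| "walk \<alpha> \<beta> a1 a2 (Suc 0) = a1"
| "walk \<alpha> \<beta> a1 a2 (Suc (Suc 0)) = a2"
| "walk \<alpha> \<beta> a1 a2 (Suc (Suc (Suc k))) =
     \<alpha> * walk \<alpha> \<beta> a1 a2 (Suc (Suc k)) + \<beta> * walk \<alpha> \<beta> a1 a2 (Suc k)"

text \<open>g_1 = 1, g_2 = alpha, g_{k+2} = alpha g_{k+1} + beta g_k; we set g_0 = 0,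
  which is consistent with the recurrence.\<close>
fun gseq :: "int \<Rightarrow> int \<Rightarrow> nat \<Rightarrow> int" where
  "gseq \<alpha> \<beta> 0 = 0"
| "gseq \<alpha> \<beta> (Suc 0) = 1"
| "gseq \<alpha> \<beta> (Suc (Suc k)) = \<alpha> * gseq \<alpha> \<beta> (Suc k) + \<beta> * gseq \<alpha> \<beta> k"

text \<open>s(n;a1,a2): largest index s \<ge> 1 with w_s = n, or -\<infinity> if there is none.\<close>
definition s_walk :: "int \<Rightarrow> int \<Rightarrow> int \<Rightarrow> int \<Rightarrow> int \<Rightarrow> ereal" where
  "s_walk \<alpha> \<beta> n a1 a2 =
     Sup ((\<lambda>k. ereal (real k)) ` {k. k \<ge> 1 \<and> walk \<alpha> \<beta> a1 a2 k = n})"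

definition s_max :: "int \<Rightarrow> int \<Rightarrow> int \<Rightarrow> ereal" where
  "s_max \<alpha> \<beta> n = Sup {s_walk \<alpha> \<beta> n a1 a2 | a1 a2. a1 \<ge> 1 \<and> a2 \<ge> 1}"

definition abt_cond :: "int \<Rightarrow> int \<Rightarrow> int \<Rightarrow> int \<Rightarrow> int \<Rightarrow> nat \<Rightarrow> bool" where
  "abt_cond \<alpha> \<beta> n a b t \<longleftrightarrow>
     a \<ge> 1 \<and> b \<ge> 1 \<and> t \<ge> 2 \<and>
     n = a * gseq \<alpha> \<beta> t + \<beta> * b * gseq \<alpha> \<beta> (t - 1) \<and>
     a \<le> (\<beta> - 1) * gseq \<alpha> \<beta> (t + 1) + \<alpha> * b \<and>
     b \<le> gseq \<alpha> \<beta> t \<and>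
     \<not> (\<exists>l::nat. \<exists>m::int. m > 0 \<and> a - \<alpha> * b - int l * gseq \<alpha> \<beta> (t + 1) = \<beta> * m)"

definition abt :: "int \<Rightarrow> int \<Rightarrow> int \<Rightarrow> int \<times> int \<times> nat" where
  "abt \<alpha> \<beta> n = (THE (a, b, t). abt_cond \<alpha> \<beta> n a b t)"

definition a_of :: "int \<Rightarrow> int \<Rightarrow> int \<Rightarrow> int" where
  "a_of \<alpha> \<beta> n = fst (abt \<alpha> \<beta> n)"
definition b_of :: "int \<Rightarrow> int \<Rightarrow> int \<Rightarrow> int" where
  "b_of \<alpha> \<beta> n = fst (snd (abt \<alpha> \<beta> n))"
definition t_of :: "int \<Rightarrow> int \<Rightarrow> int \<Rightarrow> nat" where
  "t_of \<alpha> \<beta> n = snd (snd (abt \<alpha> \<beta> n))"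

end

theory Submission
  imports Defs
begin

(* Write g for gseq. By the recurrence, A g(s+1) + beta B g(s) = (alpha A + beta B) g(s) + beta A g(s-1),
  so a representation of n with positive coefficients at level s + 1 yields one at level s.
  For n_t = beta g(t) g(t+1) there is none at level t + 1: it would give g(t+1) | beta B g(t), hence
  g(t+1) | B because g(t+1) is coprime to beta and to g(t), and then the right-hand side exceeds n_t.
  So no decomposition of n_t has index s > t. Index s < t is excluded because any n with a
  decomposition of index s is at most beta g(s) g(s+1), which grows strictly with s. At s = t the same
  divisibility forces b = g(t), which determines a; and the walk started at (g(t), a_t) reaches n_t
  at step t + 1. *)

lemma gseq_nonneg:
  assumes "\<alpha> > 0" "\<beta> > 0"
  shows "gseq \<alpha> \<beta> k \<ge> 0"
  by (induction k rule: induct_nat_012) (use assms in auto)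

lemma gseq_pos:
  assumes "\<alpha> > 0" "\<beta> > 0" "k > 0"
  shows "gseq \<alpha> \<beta> k > 0"
  using assms(3)
proof (induction k rule: induct_nat_012)
  case (ge2 k)
  then show ?case
    using assms(1,2) gseq_nonneg[OF assms(1,2), of k] by (simp add: add_pos_nonneg)
qed simp_all

lemma strict_mono_gseq_product:
  assumes "\<alpha> > 0" "\<beta> > 0"
  shows "strict_mono (\<lambda>k. gseq \<alpha> \<beta> k * gseq \<alpha> \<beta> (Suc k))"
  unfolding strict_mono_Suc_iff
proof
  fix k
  have "0 < \<alpha> * gseq \<alpha> \<beta> (Suc k)"
    using assms gseq_pos[OF assms, of "Suc k"] by simp
  moreover have "gseq \<alpha> \<beta> k \<le> \<beta> * gseq \<alpha> \<beta> k"
    using assms gseq_nonneg[OF assms, of k] by (simp add: mult_le_cancel_right1)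
  ultimately have "gseq \<alpha> \<beta> k < gseq \<alpha> \<beta> (Suc (Suc k))"
    by simp
  then show "gseq \<alpha> \<beta> k * gseq \<alpha> \<beta> (Suc k) < gseq \<alpha> \<beta> (Suc k) * gseq \<alpha> \<beta> (Suc (Suc k))"
    using gseq_pos[OF assms, of "Suc k"] by (simp add: mult.commute)
qed

lemma coprime_gseq_Suc_beta:
  assumes "coprime \<alpha> \<beta>"
  shows "coprime (gseq \<alpha> \<beta> (Suc k)) \<beta>"
proof (induction k rule: induct_nat_012)
  case (ge2 k)
  have "gcd \<beta> (gseq \<alpha> \<beta> (Suc k) * \<beta> + \<alpha> * gseq \<alpha> \<beta> (Suc (Suc k))) = 1"
    using ge2(2) assms by (simp add: gcd_add_mult coprime_commute)
  then show ?case
    by (simp add: coprime_iff_gcd_eq_1 gcd.commute ac_simps)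
qed (simp_all add: assms)

lemma coprime_gseq_Suc:
  assumes "coprime \<alpha> \<beta>"
  shows "coprime (gseq \<alpha> \<beta> (Suc k)) (gseq \<alpha> \<beta> k)"
proof (induction k)
  case (Suc k)
  have "coprime (gseq \<alpha> \<beta> (Suc k)) (\<beta> * gseq \<alpha> \<beta> k)"
    using Suc coprime_gseq_Suc_beta[OF assms, of k] by simp
  then have "gcd (gseq \<alpha> \<beta> (Suc k)) (\<alpha> * gseq \<alpha> \<beta> (Suc k) + \<beta> * gseq \<alpha> \<beta> k) = 1"
    by (simp only: gcd_add_mult coprime_iff_gcd_eq_1)
  then show ?case
    by (simp add: coprime_iff_gcd_eq_1 ac_simps)
qed simp

lemma gseq_Suc_eq:
  "0 < k \<Longrightarrow> gseq \<alpha> \<beta> (Suc k) = \<alpha> * gseq \<alpha> \<beta> k + \<beta> * gseq \<alpha> \<beta> (k - 1)"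
  by (cases k) auto

lemma walk_eq_gseq:
  "walk \<alpha> \<beta> a1 a2 (Suc (Suc k)) = a2 * gseq \<alpha> \<beta> (Suc k) + \<beta> * a1 * gseq \<alpha> \<beta> k"
  by (induction k rule: induct_nat_012) (simp_all add: algebra_simps)

lemma gseq_Suc_dvd_cancel:
  assumes "coprime \<alpha> \<beta>" "gseq \<alpha> \<beta> (Suc k) dvd \<beta> * B * gseq \<alpha> \<beta> k"
  shows "gseq \<alpha> \<beta> (Suc k) dvd B"
  using assms(2) coprime_gseq_Suc_beta[OF assms(1)] coprime_gseq_Suc[OF assms(1)]
  by (simp add: coprime_dvd_mult_left_iff coprime_dvd_mult_right_iff)

lemma gseq_product_ne_rep_above:
  assumes "\<alpha> > 0" "\<beta> > 0" "coprime \<alpha> \<beta>" "0 < t" "t \<le> s" "A > 0" "B > 0"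
  shows "\<beta> * gseq \<alpha> \<beta> t * gseq \<alpha> \<beta> (Suc t) \<noteq> A * gseq \<alpha> \<beta> (Suc s) + \<beta> * B * gseq \<alpha> \<beta> s"
  using assms(5-7)
proof (induction s arbitrary: A B rule: dec_induct)
  case base
  let ?g = "gseq \<alpha> \<beta> t" and ?g' = "gseq \<alpha> \<beta> (Suc t)"
  show ?case
  proof
    assume eq: "\<beta> * ?g * ?g' = A * ?g' + \<beta> * B * ?g"
    then have "\<beta> * B * ?g = ?g' * (\<beta> * ?g - A)"
      by (simp add: algebra_simps)
    then have "?g' dvd B"
      using gseq_Suc_dvd_cancel[OF assms(3)] by (metis dvd_triv_left)
    then have "?g' \<le> B"
      using base by (simp add: zdvd_imp_le)
    then have "\<beta> * ?g * ?g' \<le> \<beta> * B * ?g"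
      using assms(2) gseq_pos[OF assms(1,2,4)] by (simp add: mult.commute mult_left_mono)
    moreover have "0 < A * ?g'"
      using base gseq_pos[OF assms(1,2)] by simp
    ultimately show False
      using eq by simp
  qed
next
  case (step s)
  have "A * gseq \<alpha> \<beta> (Suc (Suc s)) + \<beta> * B * gseq \<alpha> \<beta> (Suc s)
      = (\<alpha> * A + \<beta> * B) * gseq \<alpha> \<beta> (Suc s) + \<beta> * A * gseq \<alpha> \<beta> s"
    by (simp add: algebra_simps)
  moreover have "\<alpha> * A + \<beta> * B > 0"
    using assms(1,2) step.prems by (simp add: add_pos_pos)
  ultimately show ?case
    using step.IH[of "\<alpha> * A + \<beta> * B" A] step.prems by simp
qed

lemma abt_cond_le_product:
  assumes "\<alpha> > 0" "\<beta> > 0" "abt_cond \<alpha> \<beta> n a b s"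
  shows "n \<le> \<beta> * gseq \<alpha> \<beta> s * gseq \<alpha> \<beta> (s + 1)"
proof -
  let ?g = "gseq \<alpha> \<beta>"
  have a: "a \<le> (\<beta> - 1) * ?g (s + 1) + \<alpha> * b" and b: "b \<le> ?g s"
    and n: "n = a * ?g s + \<beta> * b * ?g (s - 1)" and "s \<ge> 2"
    using assms(3) unfolding abt_cond_def by auto
  then have rec: "?g (s + 1) = \<alpha> * ?g s + \<beta> * ?g (s - 1)"
    using gseq_Suc_eq[of s] by simp
  have g: "0 \<le> ?g s" "0 \<le> ?g (s + 1)"
    using gseq_nonneg[OF assms(1,2)] by auto
  have "n \<le> ((\<beta> - 1) * ?g (s + 1) + \<alpha> * b) * ?g s + \<beta> * b * ?g (s - 1)"
    using n a g by (simp add: mult_right_mono)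
  also have "\<dots> = (\<beta> - 1) * ?g (s + 1) * ?g s + b * ?g (s + 1)"
    using rec by (simp add: algebra_simps)
  also have "\<dots> \<le> (\<beta> - 1) * ?g (s + 1) * ?g s + ?g s * ?g (s + 1)"
    using b g by (simp add: mult_right_mono)
  also have "\<dots> = \<beta> * ?g s * ?g (s + 1)"
    by (simp add: algebra_simps)
  finally show ?thesis .
qed

lemma abt_cond_gseq_product_index:
  assumes "\<alpha> > 0" "\<beta> > 0" "coprime \<alpha> \<beta>" "0 < t"
    and "abt_cond \<alpha> \<beta> (\<beta> * gseq \<alpha> \<beta> t * gseq \<alpha> \<beta> (t + 1)) a b s"
  shows "s = t"
proof (rule antisym)
  have ab: "a > 0" "b > 0"
    and n: "\<beta> * gseq \<alpha> \<beta> t * gseq \<alpha> \<beta> (t + 1) = a * gseq \<alpha> \<beta> s + \<beta> * b * gseq \<alpha> \<beta> (s - 1)"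
    using assms(5) unfolding abt_cond_def by auto
  show "s \<le> t"
  proof (rule ccontr)
    assume "\<not> s \<le> t"
    then obtain s' where "s = Suc s'" "t \<le> s'"
      by (metis Suc_le_D not_less_eq_eq)
    then show False
      using n ab gseq_product_ne_rep_above[OF assms(1-4)] by auto
  qed
  show "t \<le> s"
  proof (rule ccontr)
    assume "\<not> t \<le> s"
    then have "gseq \<alpha> \<beta> s * gseq \<alpha> \<beta> (Suc s) < gseq \<alpha> \<beta> t * gseq \<alpha> \<beta> (Suc t)"
      using strict_monoD[OF strict_mono_gseq_product[OF assms(1,2)], of s t] by simp
    then have "\<beta> * gseq \<alpha> \<beta> s * gseq \<alpha> \<beta> (s + 1) < \<beta> * gseq \<alpha> \<beta> t * gseq \<alpha> \<beta> (t + 1)"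
      using assms(2) by (simp add: mult.assoc)
    then show False
      using abt_cond_le_product[OF assms(1,2,5)] by simp
  qed
qed

lemma abt_cond_gseq_product_unique:
  assumes "\<alpha> > 0" "\<beta> > 0" "coprime \<alpha> \<beta>" "0 < t"
    and "abt_cond \<alpha> \<beta> (\<beta> * gseq \<alpha> \<beta> t * gseq \<alpha> \<beta> (t + 1)) a b s"
  shows "a = (\<beta> - 1) * gseq \<alpha> \<beta> (t + 1) + \<alpha> * gseq \<alpha> \<beta> t \<and> b = gseq \<alpha> \<beta> t \<and> s = t"
proof -
  have s: "s = t"
    using abt_cond_gseq_product_index[OF assms] .
  then obtain k where t: "t = Suc k"
    using assms(4) gr0_implies_Suc by blast
  let ?g = "gseq \<alpha> \<beta>"
  have b: "0 < b" "b \<le> ?g t"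
    and n: "\<beta> * ?g t * ?g (Suc t) = a * ?g t + \<beta> * b * ?g k"
    using assms(5) s t unfolding abt_cond_def by auto
  have "\<beta> * b * ?g k = ?g t * (\<beta> * ?g (Suc t) - a)"
    using n by (simp add: algebra_simps)
  then have "?g t dvd b"
    using gseq_Suc_dvd_cancel[OF assms(3)] t by (metis dvd_triv_left)
  then have b_eq: "b = ?g t"
    using b by (simp add: zdvd_imp_le order_antisym)
  have "?g t * a = ?g t * ((\<beta> - 1) * ?g (t + 1) + \<alpha> * ?g t)"
    using n b_eq t by (simp add: algebra_simps)
  then have "a = (\<beta> - 1) * ?g (t + 1) + \<alpha> * ?g t"
    using gseq_pos[OF assms(1,2,4)] by simp
  with b_eq s show ?thesis by simp
qed

lemma abt_cond_gseq_product:
  assumes "\<alpha> > 0" "\<beta> > 0" "coprime \<alpha> \<beta>" "2 \<le> t"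
  shows "abt_cond \<alpha> \<beta> (\<beta> * gseq \<alpha> \<beta> t * gseq \<alpha> \<beta> (t + 1))
           ((\<beta> - 1) * gseq \<alpha> \<beta> (t + 1) + \<alpha> * gseq \<alpha> \<beta> t) (gseq \<alpha> \<beta> t) t"
proof -
  let ?g = "gseq \<alpha> \<beta>"
  have rec: "?g (t + 1) = \<alpha> * ?g t + \<beta> * ?g (t - 1)"
    using gseq_Suc_eq[of t] assms(4) by simp
  have g: "0 < ?g t" "0 < ?g (t + 1)"
    using gseq_pos[OF assms(1,2)] assms(4) by auto
  have "\<not> (\<exists>l::nat. \<exists>m::int. m > 0 \<and>
      (\<beta> - 1) * ?g (t + 1) + \<alpha> * ?g t - \<alpha> * ?g t - int l * ?g (t + 1) = \<beta> * m)"
  proof (intro notI, elim exE conjE)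
    fix l :: nat and m :: int
    assume "0 < m" "(\<beta> - 1) * ?g (t + 1) + \<alpha> * ?g t - \<alpha> * ?g t - int l * ?g (t + 1) = \<beta> * m"
    then have eq: "(\<beta> - 1 - int l) * ?g (t + 1) = \<beta> * m" and "0 < \<beta> * m"
      using assms(2) by (simp_all add: algebra_simps)
    then have "0 < (\<beta> - 1 - int l) * ?g (t + 1)"
      by simp
    then have "0 < \<beta> - 1 - int l"
      using g by (simp add: zero_less_mult_iff)
    moreover have "\<beta> dvd \<beta> - 1 - int l"
      using eq coprime_gseq_Suc_beta[OF assms(3), of t]
      by (metis Suc_eq_plus1 coprime_commute coprime_dvd_mult_left_iff dvd_triv_left)
    ultimately show False
      using zdvd_imp_le by fastforce
  qed
  moreover have "1 \<le> (\<beta> - 1) * ?g (t + 1) + \<alpha> * ?g t"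
  proof -
    have "0 \<le> (\<beta> - 1) * ?g (t + 1)" "0 < \<alpha> * ?g t"
      using assms(1,2) g by simp_all
    then show ?thesis by linarith
  qed
  moreover have "\<beta> * ?g t * ?g (t + 1) = ((\<beta> - 1) * ?g (t + 1) + \<alpha> * ?g t) * ?g t + \<beta> * ?g t * ?g (t - 1)"
    using rec by (simp add: algebra_simps)
  ultimately show ?thesis
    unfolding abt_cond_def using assms(4) g by auto
qed

lemma abt_eqI:
  assumes "abt_cond \<alpha> \<beta> n a b t"
    and "\<And>a' b' t'. abt_cond \<alpha> \<beta> n a' b' t' \<Longrightarrow> a' = a \<and> b' = b \<and> t' = t"
  shows "abt \<alpha> \<beta> n = (a, b, t)"
  unfolding abt_def
proof (rule the_equality)
  show "case (a, b, t) of (a, b, t) \<Rightarrow> abt_cond \<alpha> \<beta> n a b t"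
    using assms(1) by simp
  fix x :: "int \<times> int \<times> nat"
  assume "case x of (a, b, t) \<Rightarrow> abt_cond \<alpha> \<beta> n a b t"
  then show "x = (a, b, t)"
    using assms(2) by (cases x) auto
qed

lemma s_max_ge_walk_index:
  assumes "a1 \<ge> 1" "a2 \<ge> 1" "k \<ge> 1" "walk \<alpha> \<beta> a1 a2 k = n"
  shows "ereal (real k) \<le> s_max \<alpha> \<beta> n"
proof -
  have "ereal (real k) \<le> s_walk \<alpha> \<beta> n a1 a2"
    unfolding s_walk_def using assms(3,4) by (intro Sup_upper imageI) simp
  also have "\<dots> \<le> s_max \<alpha> \<beta> n"
    unfolding s_max_def using assms(1,2) by (intro Sup_upper) blast
  finally show ?thesis .
qed

theorem lemma3p2:
  fixes \<alpha> \<beta> :: int and t :: nat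
  assumes "\<alpha> > 0" and "\<beta> > 0" and "coprime \<alpha> \<beta>" and "t \<ge> 2"
  defines "n_t \<equiv> \<beta> * gseq \<alpha> \<beta> t * gseq \<alpha> \<beta> (t + 1)"
    and "a_t \<equiv> (\<beta> - 1) * gseq \<alpha> \<beta> (t + 1) + \<alpha> * gseq \<alpha> \<beta> t"
    and "b_t \<equiv> gseq \<alpha> \<beta> t"
  shows "s_max \<alpha> \<beta> n_t > 2 \<and> a_of \<alpha> \<beta> n_t = a_t \<and> b_of \<alpha> \<beta> n_t = b_t \<and> t_of \<alpha> \<beta> n_t = t"
proof -
  have cond: "abt_cond \<alpha> \<beta> n_t a_t b_t t"
    unfolding n_t_def a_t_def b_t_def using abt_cond_gseq_product[OF assms(1-4)] .
  have abt_eq: "abt \<alpha> \<beta> n_t = (a_t, b_t, t)"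
  proof (rule abt_eqI[OF cond])
    fix a b s
    assume "abt_cond \<alpha> \<beta> n_t a b s"
    then show "a = a_t \<and> b = b_t \<and> s = t"
      using abt_cond_gseq_product_unique[OF assms(1-3)] assms(4) by (simp add: n_t_def a_t_def b_t_def)
  qed
  have walk: "walk \<alpha> \<beta> b_t a_t (t + 1) = n_t"
    using assms(4) walk_eq_gseq[of \<alpha> \<beta> b_t a_t "t - 1"] gseq_Suc_eq[of t \<alpha> \<beta>]
    unfolding n_t_def a_t_def b_t_def by (simp add: algebra_simps)
  have "(2::ereal) < ereal (real (t + 1))"
    using assms(4) by simp
  also have "\<dots> \<le> s_max \<alpha> \<beta> n_t"
    using walk cond unfolding abt_cond_def by (intro s_max_ge_walk_index) auto
  finally have "s_max \<alpha> \<beta> n_t > 2" .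
  with abt_eq show ?thesis
    unfolding a_of_def b_of_def t_of_def by simp
qed

end
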